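(* Let $k$ be a positive integer. Let $G$ be an $n$-vertex graph with maximum degree $\Delta := \Delta(n)$, let $m \geq 3k^2\Delta$, let $\mathcal{L}$ be a random $(k,m)$-list-assignment for $G$, and let $B := B(G,\mathcal{L})$ be the graph of dangerous edges. Then a.a.s. (as $n \to \infty$) every connected component of $B$ has at most $20 \log n$ vertices.
   Context: A random $(k,m)$-list-assignment $\mathcal{L} = \{L(v) : v \in V(G)\}$ assigns to each vertex a uniformly random $k$-element subset of $\{1,\ldots,m\}$, independently over vertices. An edge $uv \in E(G)$ is dangerous (with respect to $\mathcal{L}$) if $L(u) \cap L(v) \neq \emptyset$; $B(G,\mathcal{L})$ is the spanning subgraph of $G$ consisting of all dangerous edges. $\log$ is the natural logarithm. *)

theory Defs
  imports "HOL-Probability.Probability"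
begin

text \<open>A graph on vertex set {0..<n} is given by a symmetric irreflexive edge
relation E (only pairs of vertices below n are considered).\<close>

definition max_degree :: "nat \<Rightarrow> (nat \<Rightarrow> nat \<Rightarrow> bool) \<Rightarrow> nat" where
  "max_degree n E = Max (insert 0 ((\<lambda>v. card {u. u < n \<and> E v u}) ` {..<n}))"

definition random_list_assignment :: "nat \<Rightarrow> nat \<Rightarrow> nat \<Rightarrow> (nat \<Rightarrow> nat set) pmf" where
  "random_list_assignment k m n =
     Pi_pmf {..<n} {} (\<lambda>_. pmf_of_set {S. S \<subseteq> {1..m} \<and> card S = k})"

definition dangerous :: "nat \<Rightarrow> (nat \<Rightarrow> nat \<Rightarrow> bool) \<Rightarrow> (nat \<Rightarrow> nat set) \<Rightarrow> nat \<Rightarrow> nat \<Rightarrow> bool" where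
  "dangerous n E L u v \<longleftrightarrow> u < n \<and> v < n \<and> E u v \<and> L u \<inter> L v \<noteq> {}"

definition component :: "nat \<Rightarrow> (nat \<Rightarrow> nat \<Rightarrow> bool) \<Rightarrow> (nat \<Rightarrow> nat set) \<Rightarrow> nat \<Rightarrow> nat set" where
  "component n E L v = {u. (dangerous n E L)\<^sup>*\<^sup>* v u}"

end

theory Submission
  imports Defs "HOL-Library.Ramsey"
begin

text \<open>
  If the component of a vertex v in B has more than 20 log n vertices, then B contains a tree
  on t = \<lfloor>20 log n\<rfloor> + 1 vertices rooted at v. Growing it greedily, always along the
  leaving edge of smallest code, yields a canonical tree, which is determined by the set of its
  t - 1 edge codes; these are distinct numbers below t\<Delta>, so there are at most
  (t\<Delta> choose t - 1) candidate trees per root. Revealing the lists leaf by leaf, each tree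
  edge is dangerous with probability at most k^2/m \<le> 1/(3\<Delta>) given the others, so the
  union bound gives failure probability at most n (t\<Delta> choose t - 1) (3\<Delta>)^(1 - t),
  which is at most 3 n (e/3)^t \<le> 3 n^(21 - 20 ln 3) and tends to 0.
\<close>

section \<open>Random k-subsets\<close>

lemma card_nsets_containing_le:
  assumes "finite A"
  shows "card {S \<in> [A]\<^bsup>k\<^esup>. j \<in> S} \<le> (card A - 1) choose (k - 1)"
proof (cases "j \<in> A")
  case True
  have "inj_on (\<lambda>S. S - {j}) {S \<in> [A]\<^bsup>k\<^esup>. j \<in> S}"
    by (rule inj_onI) (metis (no_types, lifting) insert_Diff mem_Collect_eq)
  moreover have "(\<lambda>S. S - {j}) ` {S \<in> [A]\<^bsup>k\<^esup>. j \<in> S} \<subseteq> nsets (A - {j}) (k - 1)"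
    by (auto simp: nsets_def)
  ultimately have "card {S \<in> [A]\<^bsup>k\<^esup>. j \<in> S} \<le> card (nsets (A - {j}) (k - 1))"
    using assms by (intro card_inj_on_le finite_imp_finite_nsets) auto
  also have "\<dots> = (card A - 1) choose (k - 1)"
    using assms True by simp
  finally show ?thesis .
next
  case False
  then have "{S \<in> [A]\<^bsup>k\<^esup>. j \<in> S} = {}" by (auto simp: nsets_def)
  then show ?thesis by (metis card.empty le0)
qed

lemma prob_nsets_contains_le:
  assumes "finite A" "0 < k" "k \<le> card A"
  shows "measure_pmf.prob (pmf_of_set ([A]\<^bsup>k\<^esup>)) {S. j \<in> S} \<le> k / card A"
proof -
  have nonempty: "[A]\<^bsup>k\<^esup> \<noteq> {}" using assms by (simp add: nsets_eq_empty_iff)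
  have "measure_pmf.prob (pmf_of_set ([A]\<^bsup>k\<^esup>)) {S. j \<in> S} = card {S \<in> [A]\<^bsup>k\<^esup>. j \<in> S} / (card A choose k)"
    using assms nonempty by (simp add: measure_pmf_of_set finite_imp_finite_nsets Int_def conj_commute)
  also have "\<dots> \<le> ((card A - 1) choose (k - 1)) / (card A choose k)"
    using card_nsets_containing_le[OF assms(1)] by (intro divide_right_mono) auto
  also have "\<dots> = k / card A"
  proof -
    have "real k * (card A choose k) = real (card A) * ((card A - 1) choose (k - 1))"
      using times_binomial_minus1_eq[OF assms(2)] by (metis of_nat_mult)
    moreover have "0 < card A choose k" "0 < card A" using assms by auto
    ultimately show ?thesis by (simp add: field_simps)
  qed
  finally show ?thesis .
qed

lemma prob_nsets_meets_le:
  assumes "finite A" "0 < k" "k \<le> card A" "finite T"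
  shows "measure_pmf.prob (pmf_of_set ([A]\<^bsup>k\<^esup>)) {S. S \<inter> T \<noteq> {}} \<le> card T * k / card A"
proof -
  have "measure_pmf.prob (pmf_of_set ([A]\<^bsup>k\<^esup>)) {S. S \<inter> T \<noteq> {}}
      = measure_pmf.prob (pmf_of_set ([A]\<^bsup>k\<^esup>)) (\<Union>j\<in>T. {S. j \<in> S})"
    by (rule arg_cong[where f = "measure_pmf.prob _"]) auto
  also have "\<dots> \<le> (\<Sum>j\<in>T. measure_pmf.prob (pmf_of_set ([A]\<^bsup>k\<^esup>)) {S. j \<in> S})"
    using assms(4) by (rule measure_pmf.finite_measure_subadditive_finite) auto
  also have "\<dots> \<le> (\<Sum>j\<in>T. k / card A)"
    using assms(1-3) by (intro sum_mono prob_nsets_contains_le)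
  finally show ?thesis by simp
qed

section \<open>Events along a tree\<close>

lemma measure_bind_pmf_le:
  assumes "\<And>x. x \<in> set_pmf M \<Longrightarrow> measure_pmf.prob (N x) A \<le> q * indicator B x" "0 \<le> q"
  shows "measure_pmf.prob (bind_pmf M N) A \<le> q * measure_pmf.prob M B"
proof -
  have "emeasure (bind_pmf M N) A = (\<integral>\<^sup>+x. ennreal (measure_pmf.prob (N x) A) \<partial>M)"
    unfolding emeasure_bind_pmf by (simp add: measure_pmf.emeasure_eq_measure)
  also have "\<dots> \<le> (\<integral>\<^sup>+x. ennreal q * indicator B x \<partial>M)"
    using assms(1) by (intro nn_integral_mono_AE AE_pmfI) (fastforce simp: indicator_def intro: ennreal_leI order_antisym)
  also have "\<dots> = ennreal (q * measure_pmf.prob M B)"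
    using assms(2) by (simp add: nn_integral_cmult_indicator measure_pmf.emeasure_eq_measure ennreal_mult)
  finally show ?thesis
    using assms(2) by (simp add: measure_pmf.emeasure_eq_measure)
qed

lemma Pi_pmf_insert_bind:
  assumes "finite I" "x \<notin> I"
  shows "Pi_pmf (insert x I) d p = bind_pmf (Pi_pmf I d p) (\<lambda>f. map_pmf (\<lambda>y. f(x := y)) (p x))"
  using assms by (simp add: Pi_pmf_insert' bind_commute_pmf[of "p x"] map_pmf_def)

text \<open>
  A rooted tree is given by the list xs of its vertices and a parent map pr: for 1 \<le> i,
  the vertex xs ! i hangs below xs ! pr i.
\<close>

definition tree_event :: "('b \<Rightarrow> 'b \<Rightarrow> bool) \<Rightarrow> 'a list \<Rightarrow> (nat \<Rightarrow> nat) \<Rightarrow> ('a \<Rightarrow> 'b) set" where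
  "tree_event R xs pr = {L. \<forall>i\<in>{1..<length xs}. R (L (xs ! i)) (L (xs ! pr i))}"

lemma tree_event_snoc:
  assumes "x \<notin> set xs" "\<forall>i\<in>{1..<length xs}. pr i < i" "pr (length xs) < length xs"
  shows "f(x := y) \<in> tree_event R (xs @ [x]) pr \<longleftrightarrow>
           f \<in> tree_event R xs pr \<and> R y (f (xs ! pr (length xs)))"
proof -
  have "xs ! i \<noteq> x" if "i < length xs" for i
    using assms(1) that nth_mem by blast
  then show ?thesis
    using assms(2,3) unfolding tree_event_def
    by (auto simp: nth_append atLeastLessThanSuc less_Suc_eq)
qed

lemma prob_tree_event_snoc_le:
  assumes I: "finite I" "x \<notin> I" and tree: "x \<notin> set xs" "\<forall>i\<in>{1..<length xs}. pr i < i"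
    and last: "pr (length xs) < length xs" "xs ! pr (length xs) \<in> I"
    and q: "\<And>T. T \<in> set_pmf K \<Longrightarrow> measure_pmf.prob K {S. R S T} \<le> q" "0 \<le> q"
  shows "measure_pmf.prob (Pi_pmf (insert x I) d (\<lambda>_. K)) (tree_event R (xs @ [x]) pr)
         \<le> q * measure_pmf.prob (Pi_pmf I d (\<lambda>_. K)) (tree_event R xs pr)"
  unfolding Pi_pmf_insert_bind[OF I]
proof (rule measure_bind_pmf_le[OF _ q(2)])
  let ?z = "xs ! pr (length xs)"
  fix f assume "f \<in> set_pmf (Pi_pmf I d (\<lambda>_. K))"
  then have "f ?z \<in> set_pmf K"
    using I(1) last(2) by (auto simp: set_Pi_pmf PiE_dflt_def)
  have "measure_pmf.prob (map_pmf (\<lambda>y. f(x := y)) K) (tree_event R (xs @ [x]) pr)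
      = measure_pmf.prob K {y. f \<in> tree_event R xs pr \<and> R y (f ?z)}"
    by (simp add: vimage_def tree_event_snoc[OF tree last(1)])
  also have "\<dots> \<le> q * indicator (tree_event R xs pr) f"
    using q(1)[OF \<open>f ?z \<in> set_pmf K\<close>] by (cases "f \<in> tree_event R xs pr") simp_all
  finally show "measure_pmf.prob (map_pmf (\<lambda>y. f(x := y)) K) (tree_event R (xs @ [x]) pr)
      \<le> q * indicator (tree_event R xs pr) f" .
qed

lemma prob_tree_event_le:
  assumes "finite I" "distinct xs" "set xs \<subseteq> I" "\<forall>i\<in>{1..<length xs}. pr i < i"
    and q: "\<And>T. T \<in> set_pmf K \<Longrightarrow> measure_pmf.prob K {S. R S T} \<le> q"
  shows "measure_pmf.prob (Pi_pmf I d (\<lambda>_. K)) (tree_event R xs pr) \<le> q ^ (length xs - 1)"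
  using assms(1-4)
proof (induction xs arbitrary: I rule: rev_induct)
  case Nil
  then show ?case by simp
next
  case (snoc x xs)
  obtain T where "T \<in> set_pmf K"
    using set_pmf_not_empty[of K] by blast
  then have q0: "0 \<le> q"
    using q measure_nonneg order_trans by blast
  show ?case
  proof (cases "xs = []")
    case True
    then show ?thesis by simp
  next
    case False
    then have last: "pr (length xs) < length xs"
      using snoc.prems(4) by (simp add: Suc_le_eq)
    then have "xs ! pr (length xs) \<in> I - {x}"
      using snoc.prems(2,3) nth_mem by fastforce
    then have "measure_pmf.prob (Pi_pmf (insert x (I - {x})) d (\<lambda>_. K)) (tree_event R (xs @ [x]) pr)
        \<le> q * measure_pmf.prob (Pi_pmf (I - {x}) d (\<lambda>_. K)) (tree_event R xs pr)"
      using snoc.prems last q q0 by (intro prob_tree_event_snoc_le) auto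
    also have "\<dots> \<le> q * q ^ (length xs - 1)"
      using snoc.IH[of "I - {x}"] snoc.prems q0 by (intro mult_left_mono) auto
    finally show ?thesis
      using False snoc.prems(3) by (cases xs) (simp_all add: insert_absorb)
  qed
qed

section \<open>Canonical trees\<close>

lemma strict_mono_on_image_eq:
  fixes f g :: "nat \<Rightarrow> 'a::linorder"
  assumes "strict_mono_on {a..<b} f" "strict_mono_on {a..<b} g" "f ` {a..<b} = g ` {a..<b}"
    and "i \<in> {a..<b}"
  shows "f i = g i"
proof -
  have sorted: "sorted_list_of_set (h ` {a..<b}) = map h [a..<b]"
    if "strict_mono_on {a..<b} h" for h :: "nat \<Rightarrow> 'a"
  proof -
    have "sorted_wrt (<) (map h [a..<b])"
      unfolding sorted_wrt_map
      by (rule sorted_wrt_mono_rel[OF _ sorted_wrt_upt]) (use that in \<open>auto simp: strict_mono_on_def\<close>)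
    then have "sorted (map h [a..<b])" "distinct (map h [a..<b])"
      by (simp_all add: strict_sorted_iff)
    then show ?thesis
      using sorted_list_of_set.idem_if_sorted_distinct by fastforce
  qed
  have "map f [a..<b] = map g [a..<b]"
    using sorted[OF assms(1)] sorted[OF assms(2)] unfolding assms(3) by (rule trans[OF sym])
  then show ?thesis using assms(4) by (simp add: map_eq_conv)
qed

definition neighbours :: "nat \<Rightarrow> (nat \<Rightarrow> nat \<Rightarrow> bool) \<Rightarrow> nat \<Rightarrow> nat set" where
  "neighbours n E x = {u. u < n \<and> E x u}"

definition neighbour_rank :: "nat \<Rightarrow> (nat \<Rightarrow> nat \<Rightarrow> bool) \<Rightarrow> nat \<Rightarrow> nat \<Rightarrow> nat" where
  "neighbour_rank n E x u = card {w \<in> neighbours n E x. w < u}"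

text \<open>
  Hanging u below the j-th tree vertex as its r-th neighbour (in increasing order) is encoded
  by the number j\<Delta> + r; for a tree on t vertices all these codes lie below t\<Delta>.
\<close>

definition attach_code :: "nat \<Rightarrow> (nat \<Rightarrow> nat \<Rightarrow> bool) \<Rightarrow> nat list \<Rightarrow> nat \<Rightarrow> nat \<Rightarrow> nat" where
  "attach_code n E xs j u = j * max_degree n E + neighbour_rank n E (xs ! j) u"

text \<open>
  The parent map is normalised to 0 outside {1..<t}, so that a canonical tree, whose edge
  codes increase along the list, is determined by the set of its codes.
\<close>

definition canonical_tree ::
    "nat \<Rightarrow> (nat \<Rightarrow> nat \<Rightarrow> bool) \<Rightarrow> nat \<Rightarrow> nat \<Rightarrow> nat list \<Rightarrow> (nat \<Rightarrow> nat) \<Rightarrow> bool" where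
  "canonical_tree n E v t xs pr \<longleftrightarrow>
     length xs = t \<and> distinct xs \<and> set xs \<subseteq> {..<n} \<and> xs ! 0 = v \<and>
     (\<forall>i\<in>{1..<t}. pr i < i \<and> E (xs ! pr i) (xs ! i)) \<and> (\<forall>i. i \<notin> {1..<t} \<longrightarrow> pr i = 0) \<and>
     strict_mono_on {1..<t} (\<lambda>i. attach_code n E xs (pr i) (xs ! i))"

lemma finite_neighbours [simp]: "finite (neighbours n E x)"
  by (simp add: neighbours_def)

lemma card_neighbours_le_max_degree: "x < n \<Longrightarrow> card (neighbours n E x) \<le> max_degree n E"
  unfolding max_degree_def neighbours_def by (intro Max_ge) auto

lemma neighbour_rank_less_max_degree:
  assumes "x < n" "u \<in> neighbours n E x"
  shows "neighbour_rank n E x u < max_degree n E"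
proof -
  have "{w \<in> neighbours n E x. w < u} \<subset> neighbours n E x"
    using assms(2) by blast
  then have "neighbour_rank n E x u < card (neighbours n E x)"
    unfolding neighbour_rank_def by (intro psubset_card_mono) simp_all
  then show ?thesis
    using card_neighbours_le_max_degree[OF assms(1), of E] by linarith
qed

lemma neighbour_rank_strict_mono:
  assumes "u \<in> neighbours n E x" "u < u'"
  shows "neighbour_rank n E x u < neighbour_rank n E x u'"
proof -
  have "{w \<in> neighbours n E x. w < u} \<subset> {w \<in> neighbours n E x. w < u'}"
    using assms by auto
  then show ?thesis
    unfolding neighbour_rank_def by (intro psubset_card_mono) simp_all
qed

lemma neighbour_rank_inj:
  "u \<in> neighbours n E x \<Longrightarrow> u' \<in> neighbours n E x \<Longrightarrow>
     neighbour_rank n E x u = neighbour_rank n E x u' \<Longrightarrow> u = u'"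
  by (cases u u' rule: linorder_cases) (auto dest: neighbour_rank_strict_mono)

lemma attach_code_less:
  assumes "xs ! j < n" "u \<in> neighbours n E (xs ! j)"
  shows "attach_code n E xs j u < Suc j * max_degree n E"
  using neighbour_rank_less_max_degree[OF assms] by (simp add: attach_code_def)

lemma attach_code_eqD:
  assumes "xs ! j < n" "u \<in> neighbours n E (xs ! j)" "ys ! j' < n" "u' \<in> neighbours n E (ys ! j')"
    and "attach_code n E xs j u = attach_code n E ys j' u'"
  shows "j = j'" "neighbour_rank n E (xs ! j) u = neighbour_rank n E (ys ! j') u'"
proof -
  let ?D = "max_degree n E"
  have ranks: "neighbour_rank n E (xs ! j) u < ?D" "neighbour_rank n E (ys ! j') u' < ?D"
    using assms neighbour_rank_less_max_degree by blast+
  then have "j = attach_code n E xs j u div ?D" "j' = attach_code n E ys j' u' div ?D"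
    by (simp_all add: attach_code_def)
  then show "j = j'"
    using assms(5) by simp
  then show "neighbour_rank n E (xs ! j) u = neighbour_rank n E (ys ! j') u'"
    using assms(5) by (simp add: attach_code_def)
qed

lemma canonical_tree_edge:
  assumes "canonical_tree n E v t xs pr" "i \<in> {1..<t}"
  shows "pr i < i" "xs ! pr i < n" "xs ! i \<in> neighbours n E (xs ! pr i)"
proof -
  show "pr i < i"
    using assms unfolding canonical_tree_def by blast
  with assms have "pr i < length xs" "i < length xs" "set xs \<subseteq> {..<n}" "E (xs ! pr i) (xs ! i)"
    unfolding canonical_tree_def by auto
  then show "xs ! pr i < n" "xs ! i \<in> neighbours n E (xs ! pr i)"
    unfolding neighbours_def using nth_mem by blast+
qed

lemma canonical_tree_unique:
  assumes xs: "canonical_tree n E v t xs pr" and ys: "canonical_tree n E v t ys qr"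
    and same_codes: "(\<lambda>i. attach_code n E xs (pr i) (xs ! i)) ` {1..<t}
                   = (\<lambda>i. attach_code n E ys (qr i) (ys ! i)) ` {1..<t}"
  shows "xs = ys" "pr = qr"
proof -
  have codes: "attach_code n E xs (pr i) (xs ! i) = attach_code n E ys (qr i) (ys ! i)"
    if "i \<in> {1..<t}" for i
    using xs ys strict_mono_on_image_eq[OF _ _ same_codes that] unfolding canonical_tree_def by blast
  show pr_eq: "pr = qr"
  proof
    fix i
    show "pr i = qr i"
    proof (cases "i \<in> {1..<t}")
      case True
      show ?thesis
        using attach_code_eqD(1)[OF canonical_tree_edge(2,3)[OF xs True]
            canonical_tree_edge(2,3)[OF ys True] codes[OF True]] .
    next
      case False
      then show ?thesis using xs ys unfolding canonical_tree_def by simp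
    qed
  qed
  have "xs ! i = ys ! i" if "i < t" for i
    using that
  proof (induction i rule: less_induct)
    case (less i)
    show ?case
    proof (cases "i = 0")
      case True
      then show ?thesis using xs ys unfolding canonical_tree_def by simp
    next
      case False
      then have i: "i \<in> {1..<t}" using less.prems by simp
      have parent: "xs ! pr i = ys ! qr i"
        using less.IH canonical_tree_edge(1)[OF xs i] less.prems pr_eq by simp
      have "neighbour_rank n E (xs ! pr i) (xs ! i) = neighbour_rank n E (xs ! pr i) (ys ! i)"
        using attach_code_eqD(2)[OF canonical_tree_edge(2,3)[OF xs i]
            canonical_tree_edge(2,3)[OF ys i] codes[OF i]] parent by simp
      then show ?thesis
        using canonical_tree_edge(3)[OF xs i] canonical_tree_edge(3)[OF ys i] parent
        by (auto intro: neighbour_rank_inj)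
    qed
  qed
  then show "xs = ys"
    using xs ys unfolding canonical_tree_def by (intro nth_equalityI) auto
qed

lemma canonical_tree_codes:
  assumes "canonical_tree n E v t xs pr"
  shows "(\<lambda>i. attach_code n E xs (pr i) (xs ! i)) ` {1..<t} \<in> nsets {..<t * max_degree n E} (t - 1)"
proof -
  have "attach_code n E xs (pr i) (xs ! i) < t * max_degree n E" if "i \<in> {1..<t}" for i
  proof -
    have "attach_code n E xs (pr i) (xs ! i) < Suc (pr i) * max_degree n E"
      using canonical_tree_edge(2,3)[OF assms that] by (rule attach_code_less)
    also have "\<dots> \<le> t * max_degree n E"
      using canonical_tree_edge(1)[OF assms that] that by (intro mult_right_mono) auto
    finally show ?thesis .
  qed
  moreover have "inj_on (\<lambda>i. attach_code n E xs (pr i) (xs ! i)) {1..<t}"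
    using assms unfolding canonical_tree_def by (rule conjE[OF _ strict_mono_on_imp_inj_on]) auto
  ultimately show ?thesis
    by (auto simp: nsets_def card_image)
qed

lemma card_canonical_trees_le:
  "finite {(xs, pr). canonical_tree n E v t xs pr}"
  "card {(xs, pr). canonical_tree n E v t xs pr} \<le> (t * max_degree n E) choose (t - 1)"
proof -
  let ?T = "{(xs, pr). canonical_tree n E v t xs pr}"
  let ?codes = "\<lambda>(xs, pr). (\<lambda>i. attach_code n E xs (pr i) (xs ! i)) ` {1..<t}"
  let ?N = "nsets {..<t * max_degree n E} (t - 1)"
  have inj: "inj_on ?codes ?T"
  proof (rule inj_onI)
    fix p p' assume "p \<in> ?T" "p' \<in> ?T" "?codes p = ?codes p'"
    then show "p = p'"
      using canonical_tree_unique[of n E v t "fst p" "snd p" "fst p'" "snd p'"]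
      by (auto simp: case_prod_beta prod_eq_iff)
  qed
  have sub: "?codes ` ?T \<subseteq> ?N"
    using canonical_tree_codes by fastforce
  have "finite ?N"
    by (simp add: finite_imp_finite_nsets)
  show "finite ?T"
    using finite_subset[OF sub \<open>finite ?N\<close>] inj by (rule finite_imageD)
  have "card ?T \<le> card ?N"
    using inj sub \<open>finite ?N\<close> by (rule card_inj_on_le)
  then show "card ?T \<le> (t * max_degree n E) choose (t - 1)"
    by simp
qed

lemma attach_code_append:
  "j < length xs \<Longrightarrow> attach_code n E (xs @ ys) j u = attach_code n E xs j u"
  by (simp add: attach_code_def nth_append)

lemma canonical_tree_snoc:
  assumes tree: "canonical_tree n E v s xs pr"
    and new: "j < s" "u < n" "u \<notin> set xs" "E (xs ! j) u"
    and larger: "\<forall>i\<in>{1..<s}. attach_code n E xs (pr i) (xs ! i) < attach_code n E xs j u"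
  shows "canonical_tree n E v (Suc s) (xs @ [u]) (pr(s := j))"
proof -
  have len: "length xs = s" and pr: "\<forall>i\<in>{1..<s}. pr i < i \<and> E (xs ! pr i) (xs ! i)"
    and mono: "strict_mono_on {1..<s} (\<lambda>i. attach_code n E xs (pr i) (xs ! i))"
    using tree unfolding canonical_tree_def by auto
  have codes: "attach_code n E (xs @ [u]) ((pr(s := j)) i) ((xs @ [u]) ! i) =
      (if i = s then attach_code n E xs j u else attach_code n E xs (pr i) (xs ! i))"
    if "i \<in> {1..<Suc s}" for i
  proof (cases "i = s")
    case True
    then show ?thesis using new(1) len by (simp add: attach_code_append nth_append)
  next
    case False
    with that pr have "i < s" "pr i < i" by auto
    then show ?thesis using len by (simp add: attach_code_append nth_append)
  qed
  have "strict_mono_on {1..<Suc s} (\<lambda>i. attach_code n E (xs @ [u]) ((pr(s := j)) i) ((xs @ [u]) ! i))"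
  proof (rule strict_mono_onI)
    fix r r' assume r: "r \<in> {1..<Suc s}" and r': "r' \<in> {1..<Suc s}" and "r < r'"
    then show "attach_code n E (xs @ [u]) ((pr(s := j)) r) ((xs @ [u]) ! r)
             < attach_code n E (xs @ [u]) ((pr(s := j)) r') ((xs @ [u]) ! r')"
      unfolding codes[OF r] codes[OF r'] using larger strict_mono_onD[OF mono, of r r'] by auto
  qed
  moreover have "(pr(s := j)) i < i \<and> E ((xs @ [u]) ! (pr(s := j)) i) ((xs @ [u]) ! i)"
    if "i \<in> {1..<Suc s}" for i
  proof (cases "i = s")
    case True
    then show ?thesis using new(1,4) len by (simp add: nth_append)
  next
    case False
    with that pr have "i < s" "pr i < i" "E (xs ! pr i) (xs ! i)" by auto
    then show ?thesis using len by (simp add: nth_append)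
  qed
  ultimately show ?thesis
    using tree new len unfolding canonical_tree_def by (auto simp: nth_append)
qed

text \<open>
  A greedy tree is one grown in Prim's order: every edge of R leaving it has a larger code
  than all tree edges. Adding the cheapest leaving edge therefore keeps the codes increasing.
\<close>

definition greedy_tree ::
    "nat \<Rightarrow> (nat \<Rightarrow> nat \<Rightarrow> bool) \<Rightarrow> (nat \<Rightarrow> nat \<Rightarrow> bool) \<Rightarrow> nat \<Rightarrow> nat \<Rightarrow> nat list \<Rightarrow> (nat \<Rightarrow> nat) \<Rightarrow> bool"
  where
  "greedy_tree n E R v t xs pr \<longleftrightarrow>
     canonical_tree n E v t xs pr \<and> (\<forall>i\<in>{1..<t}. R (xs ! pr i) (xs ! i)) \<and>
     (\<forall>i\<in>{1..<t}. \<forall>j<t. \<forall>u. R (xs ! j) u \<longrightarrow> u \<notin> set xs \<longrightarrow>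
        attach_code n E xs (pr i) (xs ! i) < attach_code n E xs j u)"

lemma greedy_tree_singleton: "v < n \<Longrightarrow> greedy_tree n E R v 1 [v] (\<lambda>_. 0)"
  by (simp add: greedy_tree_def canonical_tree_def)

lemma attach_code_exit_snoc_gt:
  assumes R: "\<And>a b. R a b \<Longrightarrow> a < n \<and> b < n \<and> E a b"
    and len: "length xs = s"
    and exit: "j < s" "u \<notin> set xs" "R (xs ! j) u"
    and least: "\<And>j' u'. j' < s \<Longrightarrow> u' \<notin> set xs \<Longrightarrow> R (xs ! j') u' \<Longrightarrow>
                  attach_code n E xs j u \<le> attach_code n E xs j' u'"
    and exit': "j' < Suc s" "u' \<notin> set (xs @ [u])" "R ((xs @ [u]) ! j') u'"
  shows "attach_code n E xs j u < attach_code n E (xs @ [u]) j' u'"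
proof -
  let ?D = "max_degree n E"
  have u: "xs ! j < n" "u \<in> neighbours n E (xs ! j)"
    using R[OF exit(3)] by (simp_all add: neighbours_def)
  show ?thesis
  proof (cases "j' = s")
    case True
    have "attach_code n E xs j u < Suc j * ?D"
      using u by (rule attach_code_less)
    also have "\<dots> \<le> s * ?D"
      using exit(1) by (intro mult_right_mono) auto
    also have "\<dots> \<le> attach_code n E (xs @ [u]) j' u'"
      using True by (simp add: attach_code_def)
    finally show ?thesis .
  next
    case False
    with exit' len have j': "j' < s" "u' \<notin> set xs" "u' \<noteq> u" "R (xs ! j') u'"
      by (auto simp: nth_append)
    have u': "xs ! j' < n" "u' \<in> neighbours n E (xs ! j')"
      using R[OF j'(4)] by (simp_all add: neighbours_def)
    have "attach_code n E xs j u \<noteq> attach_code n E xs j' u'"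
    proof
      assume eq: "attach_code n E xs j u = attach_code n E xs j' u'"
      then have "j = j'" "neighbour_rank n E (xs ! j) u = neighbour_rank n E (xs ! j') u'"
        using attach_code_eqD[OF u u'] by simp_all
      then show False
        using neighbour_rank_inj u(2) u'(2) j'(3) by blast
    qed
    then show ?thesis
      using least[OF j'(1,2,4)] j'(1) len by (simp add: attach_code_append)
  qed
qed

lemma greedy_tree_snoc:
  assumes R: "\<And>a b. R a b \<Longrightarrow> a < n \<and> b < n \<and> E a b"
    and greedy: "greedy_tree n E R v s xs pr"
    and exit: "j < s" "u \<notin> set xs" "R (xs ! j) u"
    and least: "\<And>j' u'. j' < s \<Longrightarrow> u' \<notin> set xs \<Longrightarrow> R (xs ! j') u' \<Longrightarrow>
                  attach_code n E xs j u \<le> attach_code n E xs j' u'"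
  shows "greedy_tree n E R v (Suc s) (xs @ [u]) (pr(s := j))"
proof -
  let ?c = "attach_code n E xs j u"
  have tree: "canonical_tree n E v s xs pr" and edges: "\<forall>i\<in>{1..<s}. R (xs ! pr i) (xs ! i)"
    and below: "\<forall>i\<in>{1..<s}. attach_code n E xs (pr i) (xs ! i) < ?c"
    using greedy exit unfolding greedy_tree_def by auto
  have len: "length xs = s" and parents: "\<forall>i\<in>{1..<s}. pr i < i"
    using tree unfolding canonical_tree_def by auto
  have tree': "canonical_tree n E v (Suc s) (xs @ [u]) (pr(s := j))"
    using tree exit below R[OF exit(3)] by (intro canonical_tree_snoc) auto
  show ?thesis
    unfolding greedy_tree_def
  proof (intro conjI tree' ballI allI impI)
    fix i assume i: "i \<in> {1..<Suc s}"
    have code_le: "attach_code n E (xs @ [u]) ((pr(s := j)) i) ((xs @ [u]) ! i) \<le> ?c"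
    proof (cases "i = s")
      case True
      then show ?thesis using exit(1) len by (simp add: attach_code_append nth_append)
    next
      case False
      with i parents have i': "i \<in> {1..<s}" "pr i < i" by auto
      then show ?thesis
        using below[rule_format, OF i'(1)] len by (simp add: attach_code_append nth_append)
    qed
    show "R ((xs @ [u]) ! (pr(s := j)) i) ((xs @ [u]) ! i)"
    proof (cases "i = s")
      case True
      then show ?thesis using exit(1,3) len by (simp add: nth_append)
    next
      case False
      with i parents edges have "i < s" "pr i < i" "R (xs ! pr i) (xs ! i)" by auto
      then show ?thesis using len by (simp add: nth_append)
    qed
    fix j' u' assume "j' < Suc s" "R ((xs @ [u]) ! j') u'" "u' \<notin> set (xs @ [u])"
    with code_le show "attach_code n E (xs @ [u]) ((pr(s := j)) i) ((xs @ [u]) ! i)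
        < attach_code n E (xs @ [u]) j' u'"
      using attach_code_exit_snoc_gt[where R = R, OF R len exit least] by (meson le_less_trans)
  qed
qed

lemma rtranclp_exit_edge: "R\<^sup>*\<^sup>* a w \<Longrightarrow> a \<in> A \<Longrightarrow> w \<notin> A \<Longrightarrow> \<exists>x\<in>A. \<exists>u. u \<notin> A \<and> R x u"
  by (induction rule: rtranclp_induct) auto

lemma reachable_exit_edge:
  assumes "distinct xs" "xs \<noteq> []" "xs ! 0 = v" "set xs \<subseteq> {u. R\<^sup>*\<^sup>* v u}"
    and "length xs < card {u. R\<^sup>*\<^sup>* v u}"
  shows "\<exists>j<length xs. \<exists>u. u \<notin> set xs \<and> R (xs ! j) u"
proof -
  have "card (set xs) = length xs"
    using assms(1) by (simp add: distinct_card)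
  then have "set xs \<noteq> {u. R\<^sup>*\<^sup>* v u}"
    using assms(5) by auto
  then obtain w where "w \<in> {u. R\<^sup>*\<^sup>* v u}" "w \<notin> set xs"
    using assms(4) by (meson subsetI subset_antisym)
  moreover have "v \<in> set xs"
    using nth_mem[of 0 xs] assms(2,3) by simp
  ultimately obtain x u where "x \<in> set xs" "u \<notin> set xs" "R x u"
    using rtranclp_exit_edge[of R v w "set xs"] by auto
  then show ?thesis
    by (metis in_set_conv_nth)
qed

lemma greedy_tree_grow:
  assumes R: "\<And>a b. R a b \<Longrightarrow> a < n \<and> b < n \<and> E a b"
    and greedy: "greedy_tree n E R v s xs pr" and "1 \<le> s"
    and sub: "set xs \<subseteq> {u. R\<^sup>*\<^sup>* v u}" and small: "s < card {u. R\<^sup>*\<^sup>* v u}"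
  shows "\<exists>xs' pr'. greedy_tree n E R v (Suc s) xs' pr' \<and> set xs' \<subseteq> {u. R\<^sup>*\<^sup>* v u}"
proof -
  let ?exit = "\<lambda>(j, u). j < s \<and> u \<notin> set xs \<and> R (xs ! j) u"
  let ?code = "\<lambda>(j, u). attach_code n E xs j u"
  have "canonical_tree n E v s xs pr"
    using greedy by (simp add: greedy_tree_def)
  then have len: "length xs = s" and distinct: "distinct xs" and root: "xs ! 0 = v"
    by (simp_all add: canonical_tree_def)
  then have "xs \<noteq> []"
    using \<open>1 \<le> s\<close> by auto
  then obtain j0 u0 where "?exit (j0, u0)"
    using reachable_exit_edge[OF distinct _ root sub] small len by auto
  then have "\<exists>p. ?exit p \<and> (\<forall>p'. ?exit p' \<longrightarrow> ?code p \<le> ?code p')"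
    by (rule ex_has_least_nat)
  then obtain p where p: "?exit p" "\<forall>p'. ?exit p' \<longrightarrow> ?code p \<le> ?code p'"
    by blast
  obtain j u where "p = (j, u)"
    by (cases p)
  with p have exit: "?exit (j, u)" and least: "\<forall>p'. ?exit p' \<longrightarrow> ?code (j, u) \<le> ?code p'"
    by simp_all
  have "greedy_tree n E R v (Suc s) (xs @ [u]) (pr(s := j))"
  proof (rule greedy_tree_snoc[where R = R, OF R greedy])
    show "j < s" "u \<notin> set xs" "R (xs ! j) u"
      using exit by simp_all
    show "attach_code n E xs j u \<le> attach_code n E xs j' u'"
      if "j' < s" "u' \<notin> set xs" "R (xs ! j') u'" for j' u'
      using least that by (metis (mono_tags, lifting) case_prod_conv)
  qed
  moreover have "R\<^sup>*\<^sup>* v (xs ! j)"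
    using sub len exit by (simp add: subset_iff)
  then have "set (xs @ [u]) \<subseteq> {u. R\<^sup>*\<^sup>* v u}"
    using sub exit by auto
  ultimately show ?thesis
    by blast
qed

lemma exists_greedy_tree:
  assumes R: "\<And>a b. R a b \<Longrightarrow> a < n \<and> b < n \<and> E a b" and v: "v < n"
    and "1 \<le> t" "t \<le> card {u. R\<^sup>*\<^sup>* v u}"
  shows "\<exists>xs pr. greedy_tree n E R v t xs pr \<and> set xs \<subseteq> {u. R\<^sup>*\<^sup>* v u}"
  using assms(3,4)
proof (induction t rule: dec_induct)
  case base
  show ?case
    using greedy_tree_singleton[OF v, of E R] by (intro exI[of _ "[v]"] exI[of _ "\<lambda>_. 0"]) simp
next
  case (step s)
  then obtain xs pr where greedy: "greedy_tree n E R v s xs pr" and sub: "set xs \<subseteq> {u. R\<^sup>*\<^sup>* v u}"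
    by auto
  show ?case
    using greedy_tree_grow[where R = R, OF R greedy step.hyps(1) sub] step.prems by simp
qed

section \<open>Numerical estimates\<close>

lemma power_div_fact_le_exp:
  fixes x :: real
  assumes "0 \<le> x"
  shows "x ^ n / fact n \<le> exp x"
proof -
  have "x ^ n / fact n \<le> (\<Sum>j\<le>n. x ^ j / fact j)"
    using assms by (intro member_le_sum) auto
  also have "\<dots> \<le> exp x"
    using assms summable_exp_generic[of x]
    by (auto simp: exp_def divide_inverse ac_simps intro!: sum_le_suminf)
  finally show ?thesis .
qed

lemma binomial_times_power_le:
  fixes q :: real
  assumes "0 \<le> q" "real D * q \<le> 1 / 3" "1 \<le> t"
  shows "real ((t * D) choose (t - 1)) * q ^ (t - 1) \<le> 3 * (exp 1 / 3) ^ t"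
proof -
  obtain s where t: "t = Suc s"
    using assms(3) by (cases t) auto
  have "real ((t * D) choose s) * fact s \<le> real (t * D) ^ s"
    using binomial_fact_pow[of "t * D" s] by (metis of_nat_fact of_nat_le_iff of_nat_mult of_nat_power)
  then have "real ((t * D) choose s) * q ^ s \<le> real (t * D) ^ s / fact s * q ^ s"
    using assms(1) by (intro mult_right_mono) (simp_all add: pos_le_divide_eq)
  also have "\<dots> = (real t * (real D * q)) ^ s / fact s"
    by (simp add: power_mult_distrib)
  also have "\<dots> \<le> (real t * (1 / 3)) ^ s / fact s"
    using assms(1,2) by (intro divide_right_mono power_mono mult_left_mono) simp_all
  also have "\<dots> = 3 * (real t ^ t / fact t) / 3 ^ t"
  proof -
    have "real t ^ t / fact t = real t ^ s / fact s"
      unfolding t fact_Suc by simp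
    then show ?thesis
      unfolding t by (simp add: power_divide)
  qed
  also have "\<dots> \<le> 3 * exp (real t) / 3 ^ t"
    using power_div_fact_le_exp[of "real t" t] by (intro divide_right_mono mult_left_mono) auto
  also have "\<dots> = 3 * (exp 1 / 3) ^ t"
    by (simp add: power_divide flip: exp_of_nat_mult)
  finally show ?thesis
    unfolding t by simp
qed

lemma ln_3_gt: "21 / 20 < ln (3 :: real)"
proof -
  have "exp (1 / 20 :: real) \<le> 20 / 19"
    using exp_ge_add_one_self[of "-1 / 20 :: real"] by (simp add: exp_minus field_simps)
  then have "exp 1 * exp (1 / 20 :: real) \<le> exp 1 * (20 / 19)"
    by (rule mult_left_mono) simp
  also have "\<dots> < 272 / 100 * (20 / 19)"
    using e_less_272 by simp
  finally have "exp (21 / 20 :: real) < 3"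
    by (simp flip: exp_add)
  then show ?thesis
    by (metis exp_less_cancel_iff exp_ln zero_less_numeral)
qed

lemma n_times_power_le_powr:
  assumes "1 \<le> n" "20 * ln (real n) \<le> real t"
  shows "real n * (3 * (exp 1 / 3) ^ t) \<le> 3 * real n powr (21 - 20 * ln 3)"
proof -
  have "exp 1 / 3 = exp (1 - ln (3 :: real))"
    by (simp add: exp_diff)
  then have "(exp 1 / 3) ^ t = exp (real t * (1 - ln 3))"
    by (simp add: exp_of_nat_mult)
  also have "\<dots> \<le> exp (20 * ln (real n) * (1 - ln 3))"
    using ln_3_gt assms(2) by (intro exp_mono mult_right_mono_neg) auto
  finally have "real n * (3 * (exp 1 / 3) ^ t) \<le> 3 * (exp (ln (real n)) * exp (20 * ln (real n) * (1 - ln 3)))"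
    using assms(1) by simp
  also have "\<dots> = 3 * exp ((21 - 20 * ln 3) * ln (real n))"
    unfolding exp_add[symmetric] by (simp add: algebra_simps)
  also have "\<dots> = 3 * real n powr (21 - 20 * ln 3)"
    using assms(1) by (simp add: powr_def)
  finally show ?thesis .
qed

section \<open>Large components of the dangerous graph\<close>

lemma random_list_assignment_eq:
  "random_list_assignment k m n = Pi_pmf {..<n} {} (\<lambda>_. pmf_of_set ([{1..m}]\<^bsup>k\<^esup>))"
proof -
  have "{S. S \<subseteq> {1..m} \<and> card S = k} = [{1..m}]\<^bsup>k\<^esup>"
    by (auto simp: nsets_def intro: finite_subset)
  then show ?thesis
    by (simp add: random_list_assignment_def)
qed

lemma large_component_tree_event:
  assumes "v < n" "1 \<le> t" "t \<le> card (component n E L v)"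
  shows "\<exists>xs pr. canonical_tree n E v t xs pr \<and> L \<in> tree_event (\<lambda>S T. S \<inter> T \<noteq> {}) xs pr"
proof -
  have "\<And>a b. dangerous n E L a b \<Longrightarrow> a < n \<and> b < n \<and> E a b"
    by (simp add: dangerous_def)
  then have "\<exists>xs pr. greedy_tree n E (dangerous n E L) v t xs pr \<and> set xs \<subseteq> component n E L v"
    using exists_greedy_tree assms unfolding component_def by blast
  then obtain xs pr where greedy: "greedy_tree n E (dangerous n E L) v t xs pr"
    by blast
  then have tree: "canonical_tree n E v t xs pr"
    and edges: "\<forall>i\<in>{1..<t}. dangerous n E L (xs ! pr i) (xs ! i)"
    by (simp_all add: greedy_tree_def)
  have "L \<in> tree_event (\<lambda>S T. S \<inter> T \<noteq> {}) xs pr"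
    unfolding tree_event_def mem_Collect_eq
  proof
    fix i assume "i \<in> {1..<length xs}"
    with edges tree show "L (xs ! i) \<inter> L (xs ! pr i) \<noteq> {}"
      unfolding canonical_tree_def dangerous_def by blast
  qed
  with tree show ?thesis
    by blast
qed

lemma prob_tree_event_list_assignment_le:
  assumes "0 < k" "k \<le> m" "distinct xs" "set xs \<subseteq> {..<n}" "\<forall>i\<in>{1..<length xs}. pr i < i"
  shows "measure_pmf.prob (random_list_assignment k m n) (tree_event (\<lambda>S T. S \<inter> T \<noteq> {}) xs pr)
    \<le> (real k * real k / real m) ^ (length xs - 1)"
  unfolding random_list_assignment_eq
proof (rule prob_tree_event_le)
  fix T assume "T \<in> set_pmf (pmf_of_set ([{1..m}]\<^bsup>k\<^esup>))"
  moreover have "[{1..m}]\<^bsup>k\<^esup> \<noteq> {}"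
    using assms(2) by (simp add: nsets_eq_empty_iff)
  ultimately have "finite T" "card T = k"
    by (auto simp: finite_imp_finite_nsets nsets_def)
  then show "measure_pmf.prob (pmf_of_set ([{1..m}]\<^bsup>k\<^esup>)) {S. S \<inter> T \<noteq> {}}
      \<le> real k * real k / real m"
    using prob_nsets_meets_le[of "{1..m}" k T] assms(1,2) by simp
qed (use assms in auto)

lemma card_rooted_canonical_trees_le:
  "finite (SIGMA v:{..<n}. {(xs, pr). canonical_tree n E v t xs pr})"
  "card (SIGMA v:{..<n}. {(xs, pr). canonical_tree n E v t xs pr})
     \<le> n * ((t * max_degree n E) choose (t - 1))"
proof -
  show "finite (SIGMA v:{..<n}. {(xs, pr). canonical_tree n E v t xs pr})"
    using card_canonical_trees_le(1) by simp
  have "card (SIGMA v:{..<n}. {(xs, pr). canonical_tree n E v t xs pr})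
      = (\<Sum>v<n. card {(xs, pr). canonical_tree n E v t xs pr})"
    using card_canonical_trees_le(1) by simp
  also have "\<dots> \<le> (\<Sum>v<n. (t * max_degree n E) choose (t - 1))"
    by (intro sum_mono card_canonical_trees_le(2))
  finally show "card (SIGMA v:{..<n}. {(xs, pr). canonical_tree n E v t xs pr})
      \<le> n * ((t * max_degree n E) choose (t - 1))"
    by simp
qed

lemma prob_large_component_le:
  assumes "0 < k" "k \<le> m" "1 \<le> t"
  shows "measure_pmf.prob (random_list_assignment k m n) {L. \<exists>v<n. t \<le> card (component n E L v)}
    \<le> real n * real ((t * max_degree n E) choose (t - 1)) * (real k * real k / real m) ^ (t - 1)"
proof -
  let ?M = "random_list_assignment k m n"
  let ?q = "real k * real k / real m"
  let ?event = "\<lambda>(v :: nat, xs, pr). tree_event (\<lambda>S T. S \<inter> T \<noteq> {}) xs pr"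
  define Trees where "Trees = (SIGMA v:{..<n}. {(xs, pr). canonical_tree n E v t xs pr})"
  have "{L. \<exists>v<n. t \<le> card (component n E L v)} \<subseteq> (\<Union>p\<in>Trees. ?event p)"
    using large_component_tree_event[OF _ assms(3)] by (fastforce simp: Trees_def)
  then have "measure_pmf.prob ?M {L. \<exists>v<n. t \<le> card (component n E L v)}
      \<le> measure_pmf.prob ?M (\<Union>p\<in>Trees. ?event p)"
    by (rule measure_pmf.finite_measure_mono) simp
  also have "\<dots> \<le> (\<Sum>p\<in>Trees. measure_pmf.prob ?M (?event p))"
    using card_rooted_canonical_trees_le(1)
    by (intro measure_pmf.finite_measure_subadditive_finite) (simp_all add: Trees_def)
  also have "\<dots> \<le> (\<Sum>p\<in>Trees. ?q ^ (t - 1))"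
  proof (rule sum_mono, clarify)
    fix v xs pr assume "(v, xs, pr) \<in> Trees"
    then have "canonical_tree n E v t xs pr"
      by (simp add: Trees_def)
    then have "length xs = t" "distinct xs" "set xs \<subseteq> {..<n}" "\<forall>i\<in>{1..<length xs}. pr i < i"
      unfolding canonical_tree_def by auto
    then show "measure_pmf.prob ?M (tree_event (\<lambda>S T. S \<inter> T \<noteq> {}) xs pr) \<le> ?q ^ (t - 1)"
      using prob_tree_event_list_assignment_le[OF assms(1,2)] by metis
  qed
  also have "\<dots> \<le> real n * real ((t * max_degree n E) choose (t - 1)) * ?q ^ (t - 1)"
    using card_rooted_canonical_trees_le(2)[of n E t]
    by (simp add: Trees_def mult_right_mono flip: of_nat_mult)
  finally show ?thesis .
qed

lemma prob_large_component_le_powr: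
  assumes "0 < k" "k \<le> m" "3 * real k ^ 2 * real (max_degree n E) \<le> real m" "1 \<le> n"
  shows "measure_pmf.prob (random_list_assignment k m n)
           {L. \<exists>v<n. 20 * ln (real n) < real (card (component n E L v))}
         \<le> 3 * real n powr (21 - 20 * ln 3)"
proof -
  define t where "t = nat \<lfloor>20 * ln (real n)\<rfloor> + 1"
  have ln: "0 \<le> 20 * ln (real n)"
    using assms(4) by simp
  then have t: "1 \<le> t" "20 * ln (real n) \<le> real t"
    unfolding t_def by linarith+
  have "20 * ln (real n) < real c \<longleftrightarrow> t \<le> c" for c
  proof -
    have "20 * ln (real n) < real c \<longleftrightarrow> \<lfloor>20 * ln (real n)\<rfloor> < int c"
      by (simp add: floor_less_iff)
    also have "\<dots> \<longleftrightarrow> t \<le> c"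
      unfolding t_def using ln by linarith
    finally show ?thesis .
  qed
  then have "{L. \<exists>v<n. 20 * ln (real n) < real (card (component n E L v))}
      = {L. \<exists>v<n. t \<le> card (component n E L v)}"
    by simp
  then have "measure_pmf.prob (random_list_assignment k m n)
           {L. \<exists>v<n. 20 * ln (real n) < real (card (component n E L v))}
      \<le> real n * (real ((t * max_degree n E) choose (t - 1)) * (real k * real k / real m) ^ (t - 1))"
    using prob_large_component_le[OF assms(1,2) t(1)] by (simp add: mult.assoc)
  also have "\<dots> \<le> real n * (3 * (exp 1 / 3) ^ t)"
  proof (intro mult_left_mono binomial_times_power_le t(1))
    show "real (max_degree n E) * (real k * real k / real m) \<le> 1 / 3"
      using assms(1-3) by (simp add: field_simps power2_eq_square)
  qed simp_all
  also have "\<dots> \<le> 3 * real n powr (21 - 20 * ln 3)"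
    using assms(4) t(2) by (rule n_times_power_le_powr)
  finally show ?thesis .
qed

theorem mainTheorem4:
  fixes k :: nat and E :: "nat \<Rightarrow> nat \<Rightarrow> nat \<Rightarrow> bool" and m :: "nat \<Rightarrow> nat"
  assumes "k > 0"
    and sym: "\<And>n u v. E n u v \<Longrightarrow> E n v u"
    and irrefl: "\<And>n v. \<not> E n v v"
    and m_bound: "\<And>n. real (m n) \<ge> 3 * real k ^ 2 * real (max_degree n (E n))"
    and m_ge_k: "\<And>n. k \<le> m n"
  shows "(\<lambda>n. measure_pmf.prob (random_list_assignment k (m n) n)
            {L. \<forall>v<n. real (card (component n (E n) L v)) \<le> 20 * ln (real n)})
         \<longlonglongrightarrow> 1"
proof -
  define bad where "bad n = {L. \<exists>v<n. 20 * ln (real n) < real (card (component n (E n) L v))}" for n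
  let ?P = "\<lambda>n. measure_pmf.prob (random_list_assignment k (m n) n)"
  have lim: "(\<lambda>n. 3 * real n powr (21 - 20 * ln 3)) \<longlonglongrightarrow> 0"
    using ln_3_gt by (intro tendsto_mult_right_zero tendsto_neg_powr filterlim_real_sequentially) simp
  have "?P n (bad n) \<le> 3 * real n powr (21 - 20 * ln 3)" if "1 \<le> n" for n
    unfolding bad_def using assms(1) m_ge_k m_bound that by (rule prob_large_component_le_powr)
  then have bound: "\<forall>\<^sub>F n in sequentially. ?P n (bad n) \<le> 3 * real n powr (21 - 20 * ln 3)"
    by (rule eventually_sequentiallyI)
  have "(\<lambda>n. ?P n (bad n)) \<longlonglongrightarrow> 0"
    by (rule tendsto_sandwich[OF always_eventually bound tendsto_const lim]) simp
  then have "(\<lambda>n. 1 - ?P n (bad n)) \<longlonglongrightarrow> 1"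
    using tendsto_diff[OF tendsto_const, of _ 0 _ 1] by simp
  moreover have "UNIV - bad n = {L. \<forall>v<n. real (card (component n (E n) L v)) \<le> 20 * ln (real n)}" for n
    unfolding bad_def by (auto simp: not_less)
  then have "1 - ?P n (bad n) = ?P n {L. \<forall>v<n. real (card (component n (E n) L v)) \<le> 20 * ln (real n)}" for n
    using measure_pmf.prob_compl[of "bad n" "random_list_assignment k (m n) n"] by simp
  ultimately show ?thesis
    by simp
qed

end
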